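(* Under the joint threshold-based policy with thresholds $P_S,P_D>0$ (and arbitrary dependence between the energy arrival processes at $S$ and $D$), $$\Psi(P_S,P_D)=\lim_{n\to\infty}\frac1n\sum_{t=1}^n\mathbf{E}\big[\mathbf{1}_{B_S^t\ge P_S,\;B_D^t\ge P_D}\big]=\min\Big(1,\frac{\lambda_S}{P_S},\frac{\lambda_D}{P_D}\Big).$$
   Context: Time slotted, $t=1,2,\dots$ (energy and power identified). $S$ and $D$ harvest $E_S^t,E_D^t\ge0$ at the end of slot $t$; $\{E_S^t\},\{E_D^t\}$ stationary ergodic with means $\lambda_S,\lambda_D>0$. Infinite batteries, $B_S^1=B_D^1=0$. Joint threshold-based policy: each node knows whether the other node will transmit/receive in the current slot; both act only when $B_S^t\ge P_S$ and $B_D^t\ge P_D$, i.e. for $\beta\in\{S,D\}$, $$B_\beta^{t+1}=B_\beta^t-P_\beta\,\mathbf{1}_{B_S^t\ge P_S,\,B_D^t\ge P_D}+E_\beta^t.$$ *)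

theory Defs
  imports "HOL-Probability.Probability"
begin

definition seq_shift :: "(nat \<Rightarrow> real) \<Rightarrow> (nat \<Rightarrow> real)" where
  "seq_shift x = (\<lambda>t. x (Suc t))"

abbreviation seq_space :: "(nat \<Rightarrow> real) measure" where
  "seq_space \<equiv> (\<Pi>\<^sub>M t\<in>UNIV. (borel :: real measure))"

text \<open>Strict-sense stationarity of a real-valued random process X (X t is the value in slot t+1):
  each X t is a random variable and the law of the shifted process equals the law of the process.\<close>
definition stationary_process :: "'a measure \<Rightarrow> (nat \<Rightarrow> 'a \<Rightarrow> real) \<Rightarrow> bool" where
  "stationary_process M X \<longleftrightarrow>
     (\<forall>t. X t \<in> borel_measurable M) \<and>
     (\<forall>k. distr M seq_space (\<lambda>\<omega> t. X (t + k) \<omega>) = distr M seq_space (\<lambda>\<omega> t. X t \<omega>))"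

definition ergodic_process :: "'a measure \<Rightarrow> (nat \<Rightarrow> 'a \<Rightarrow> real) \<Rightarrow> bool" where
  "ergodic_process M X \<longleftrightarrow>
     (\<forall>A \<in> sets seq_space.
        (\<forall>x \<in> space seq_space. seq_shift x \<in> A \<longleftrightarrow> x \<in> A) \<longrightarrow>
        measure M {\<omega> \<in> space M. (\<lambda>t. X t \<omega>) \<in> A} \<in> {0, 1})"

text \<open>Battery levels under the joint threshold policy.  batteries PS PD ES ED n = (B_S^{n+1}, B_D^{n+1}),
  where ES n, ED n are the energies harvested at the end of slot n+1.\<close>
fun batteries :: "real \<Rightarrow> real \<Rightarrow> (nat \<Rightarrow> real) \<Rightarrow> (nat \<Rightarrow> real) \<Rightarrow> nat \<Rightarrow> real \<times> real" where
  "batteries PS PD ES ED 0 = (0, 0)"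
| "batteries PS PD ES ED (Suc n) =
     (let (bS, bD) = batteries PS PD ES ED n;
          a = (if bS \<ge> PS \<and> bD \<ge> PD then 1 else 0)
      in (bS - PS * a + ES n, bD - PD * a + ED n))"

definition active :: "real \<Rightarrow> real \<Rightarrow> (nat \<Rightarrow> real) \<Rightarrow> (nat \<Rightarrow> real) \<Rightarrow> nat \<Rightarrow> real" where
  "active PS PD ES ED n =
     (if fst (batteries PS PD ES ED n) \<ge> PS \<and> snd (batteries PS PD ES ED n) \<ge> PD then 1 else 0)"

end

theory Submission
  imports Defs
begin

text \<open>The batteries hold the cumulative harvests minus the energy spent, so up to slot \<open>n\<close> there are
  at most \<open>min n (\<Sum>E\<^sub>S / P\<^sub>S) (\<Sum>E\<^sub>D / P\<^sub>D)\<close> active slots; by stationarity their expectation is at most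
  \<open>n min 1 (\<lambda>\<^sub>S/P\<^sub>S) (\<lambda>\<^sub>D/P\<^sub>D)\<close>.  Conversely, in an idle slot some battery is below its threshold, so
  once both cumulative harvests exceed \<open>\<rho>\<close> thresholds per slot the number of active slots is at
  least \<open>\<rho> n - O(1)\<close>.  By ergodicity the cumulative harvests eventually exceed \<open>b n\<close> for every
  \<open>b < \<lambda>\<close> almost surely; this half of Birkhoff's theorem follows from the maximal ergodic inequality
  applied to the shift-invariant event that the averages have lim inf below \<open>c\<close>.  Dominated
  convergence turns the pathwise lower bound into one for the expectations.\<close>

section \<open>Stationary processes\<close>

lemma stationary_process_measurable:
  "stationary_process M X \<Longrightarrow> X t \<in> borel_measurable M"
  by (simp add: stationary_process_def)

lemma measurable_path_shift:
  assumes "\<And>t. X t \<in> borel_measurable M"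
  shows "(\<lambda>\<omega> t. X (t + k) \<omega>) \<in> measurable M seq_space"
  by (rule measurable_PiM_single') (auto simp: assms)

lemma measurable_path:
  assumes "\<And>t. X t \<in> borel_measurable M"
  shows "(\<lambda>\<omega> t. X t \<omega>) \<in> measurable M seq_space"
  using measurable_path_shift[of X M 0] assms by simp

lemma stationary_process_integral_shift:
  fixes G :: "(nat \<Rightarrow> real) \<Rightarrow> real"
  assumes st: "stationary_process M X" and G: "G \<in> borel_measurable seq_space"
  shows "(\<integral>\<omega>. G (\<lambda>t. X (t + k) \<omega>) \<partial>M) = (\<integral>\<omega>. G (\<lambda>t. X t \<omega>) \<partial>M)"
proof -
  have X: "\<And>t. X t \<in> borel_measurable M" using st by (rule stationary_process_measurable)
  have law: "distr M seq_space (\<lambda>\<omega> t. X (t + k) \<omega>) = distr M seq_space (\<lambda>\<omega> t. X t \<omega>)"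
    using st unfolding stationary_process_def by blast
  have "(\<integral>\<omega>. G (\<lambda>t. X (t + k) \<omega>) \<partial>M) = integral\<^sup>L (distr M seq_space (\<lambda>\<omega> t. X (t + k) \<omega>)) G"
    by (rule integral_distr[symmetric, OF measurable_path_shift[of X M k, OF X] G])
  also have "\<dots> = integral\<^sup>L (distr M seq_space (\<lambda>\<omega> t. X t \<omega>)) G"
    unfolding law ..
  also have "\<dots> = (\<integral>\<omega>. G (\<lambda>t. X t \<omega>) \<partial>M)"
    by (rule integral_distr[OF measurable_path[of X M, OF X] G])
  finally show ?thesis .
qed

lemma stationary_process_integrable_shift:
  fixes G :: "(nat \<Rightarrow> real) \<Rightarrow> real"
  assumes st: "stationary_process M X" and G: "G \<in> borel_measurable seq_space"
  shows "integrable M (\<lambda>\<omega>. G (\<lambda>t. X (t + k) \<omega>)) \<longleftrightarrow> integrable M (\<lambda>\<omega>. G (\<lambda>t. X t \<omega>))"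
proof -
  have X: "\<And>t. X t \<in> borel_measurable M" using st by (rule stationary_process_measurable)
  have law: "distr M seq_space (\<lambda>\<omega> t. X (t + k) \<omega>) = distr M seq_space (\<lambda>\<omega> t. X t \<omega>)"
    using st unfolding stationary_process_def by blast
  have "integrable M (\<lambda>\<omega>. G (\<lambda>t. X (t + k) \<omega>)) \<longleftrightarrow>
      integrable (distr M seq_space (\<lambda>\<omega> t. X (t + k) \<omega>)) G"
    by (rule integrable_distr_eq[symmetric, OF measurable_path_shift[of X M k, OF X] G])
  also have "\<dots> \<longleftrightarrow> integrable (distr M seq_space (\<lambda>\<omega> t. X t \<omega>)) G"
    unfolding law ..
  also have "\<dots> \<longleftrightarrow> integrable M (\<lambda>\<omega>. G (\<lambda>t. X t \<omega>))"
    by (rule integrable_distr_eq[OF measurable_path[of X M, OF X] G])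
  finally show ?thesis .
qed

lemma stationary_process_integrable:
  assumes "stationary_process M X" and "integrable M (X 0)"
  shows "integrable M (X t)"
proof -
  have "(\<lambda>x. x 0) \<in> borel_measurable seq_space" by measurable
  from stationary_process_integrable_shift[OF assms(1) this, of t] assms(2) show ?thesis by simp
qed

lemma stationary_process_integral:
  assumes "stationary_process M X"
  shows "integral\<^sup>L M (X t) = integral\<^sup>L M (X 0)"
proof -
  have "(\<lambda>x. x 0) \<in> borel_measurable seq_space" by measurable
  from stationary_process_integral_shift[OF assms this, of t] show ?thesis by simp
qed

lemma stationary_process_integral_sum:
  assumes "stationary_process M X" and "integrable M (X 0)"
  shows "(\<integral>\<omega>. (\<Sum>t<n. X t \<omega>) \<partial>M) = real n * integral\<^sup>L M (X 0)"
proof -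
  have "(\<integral>\<omega>. (\<Sum>t<n. X t \<omega>) \<partial>M) = (\<Sum>t<n. integral\<^sup>L M (X t))"
    using stationary_process_integrable[OF assms] by (rule Bochner_Integration.integral_sum)
  also have "\<dots> = (\<Sum>t<n. integral\<^sup>L M (X 0))"
    using stationary_process_integral[OF assms(1)] by (rule sum.cong[OF refl])
  also have "\<dots> = real n * integral\<^sup>L M (X 0)" by simp
  finally show ?thesis .
qed

section \<open>Ergodic lower bound for partial sums\<close>

lemma sum_lessThan_Suc_seq_shift: "(\<Sum>t<Suc n. x t) = x 0 + (\<Sum>t<n. seq_shift x t)"
  unfolding seq_shift_def by (rule sum.lessThan_Suc_shift)

lemma frequently_below_perturbed:
  fixes a b :: "nat \<Rightarrow> real" and g :: "nat \<Rightarrow> nat"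
  assumes freq: "\<forall>N. \<exists>n\<ge>N. a n < d * real n" and "d < d'"
    and close: "\<And>n. b (g n) \<le> a n + C" and lower: "\<And>n. n \<le> Suc (g n)" and upper: "\<And>n. g n \<le> Suc n"
  shows "\<forall>N. \<exists>m\<ge>N. b m < d' * real m"
proof
  fix N
  obtain N1 :: nat where N1: "C + \<bar>d\<bar> < (d' - d) * real N1"
    using reals_Archimedean3 \<open>d < d'\<close> by (metis diff_gt_0_iff_gt mult.commute)
  obtain n where n: "n \<ge> Suc (N + N1)" "a n < d * real n" using freq by blast
  have m: "N + N1 \<le> g n" using n(1) lower[of n] by linarith
  have "real n \<le> real (g n) + 1" "real (g n) \<le> real n + 1"
    using lower[of n] upper[of n] by linarith+
  then have "d * real n \<le> d * real (g n) + \<bar>d\<bar>"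
  proof (cases "d \<ge> 0")
    case True
    with \<open>real n \<le> real (g n) + 1\<close> have "d * real n \<le> d * (real (g n) + 1)"
      by (intro mult_left_mono)
    with True show ?thesis by (simp add: algebra_simps)
  next
    case False
    with \<open>real (g n) \<le> real n + 1\<close> have "d * (real n + 1) \<le> d * real (g n)"
      by (intro mult_left_mono_neg) auto
    with False show ?thesis by (simp add: algebra_simps)
  qed
  moreover have "(d' - d) * real N1 \<le> (d' - d) * real (g n)"
    using m \<open>d < d'\<close> by (intro mult_left_mono) auto
  moreover have "d' * real (g n) = d * real (g n) + (d' - d) * real (g n)"
    by (simp add: algebra_simps)
  ultimately have "b (g n) < d' * real (g n)"
    using close[of n] n(2) N1 by linarith
  with m show "\<exists>m\<ge>N. b m < d' * real m" by (intro exI[of _ "g n"] conjI) auto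
qed

text \<open>The slack \<open>1 / (k + 1)\<close> ranges over a
  countable set, which makes the set measurable, and it absorbs the bounded change of the partial sums
  under the shift, which makes it shift-invariant.\<close>
definition slow_paths :: "real \<Rightarrow> (nat \<Rightarrow> real) set" where
  "slow_paths c = {x. \<exists>k::nat. \<forall>N. \<exists>n\<ge>N. (\<Sum>t<n. x t) < (c - 1 / real (Suc k)) * real n}"

lemma slow_paths_sets: "slow_paths c \<in> sets seq_space"
proof -
  have "Measurable.pred seq_space
      (\<lambda>x. \<exists>k::nat. \<forall>N::nat. \<exists>n\<ge>N. (\<Sum>t<n. x t) < (c - 1 / real (Suc k)) * real n)"
    by measurable
  then show ?thesis by (simp add: pred_def slow_paths_def space_PiM)
qed

lemma slow_paths_seq_shift_iff: "seq_shift x \<in> slow_paths c \<longleftrightarrow> x \<in> slow_paths c"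
proof -
  have slack: "c - 1 / real (Suc k) < c - 1 / real (Suc (2 * k + 1))" for k
    by (simp add: frac_less2)
  show ?thesis
  proof
    assume "seq_shift x \<in> slow_paths c"
    then obtain k where "\<forall>N. \<exists>n\<ge>N. (\<Sum>t<n. seq_shift x t) < (c - 1 / real (Suc k)) * real n"
      by (auto simp: slow_paths_def)
    then have "\<forall>N. \<exists>m\<ge>N. (\<Sum>t<m. x t) < (c - 1 / real (Suc (2 * k + 1))) * real m"
      using slack by (rule frequently_below_perturbed[where g = Suc and C = "\<bar>x 0\<bar>"])
        (simp_all add: sum_lessThan_Suc_seq_shift del: sum.lessThan_Suc)
    then show "x \<in> slow_paths c" unfolding slow_paths_def by blast
  next
    assume "x \<in> slow_paths c"
    then obtain k where "\<forall>N. \<exists>n\<ge>N. (\<Sum>t<n. x t) < (c - 1 / real (Suc k)) * real n"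
      by (auto simp: slow_paths_def)
    then have "\<forall>N. \<exists>m\<ge>N. (\<Sum>t<m. seq_shift x t) < (c - 1 / real (Suc (2 * k + 1))) * real m"
      using slack
    proof (rule frequently_below_perturbed[where g = "\<lambda>n. n - 1" and C = "\<bar>x 0\<bar>"])
      show "(\<Sum>t<n - 1. seq_shift x t) \<le> (\<Sum>t<n. x t) + \<bar>x 0\<bar>" for n
        by (cases n) (auto simp: sum_lessThan_Suc_seq_shift simp del: sum.lessThan_Suc)
    qed auto
    then show "seq_shift x \<in> slow_paths c" unfolding slow_paths_def by blast
  qed
qed

definition max_partial_sum :: "(nat \<Rightarrow> real) \<Rightarrow> nat \<Rightarrow> real" where
  "max_partial_sum f n = (MAX k\<in>{..n}. \<Sum>t<k. f t)"

lemma max_partial_sum_ge: "k \<le> n \<Longrightarrow> (\<Sum>t<k. f t) \<le> max_partial_sum f n"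
  unfolding max_partial_sum_def by (rule Max_ge) auto

lemma max_partial_sum_nonneg: "0 \<le> max_partial_sum f n"
  using max_partial_sum_ge[of 0 n f] by simp

lemma max_partial_sum_attained: "\<exists>k\<le>n. max_partial_sum f n = (\<Sum>t<k. f t)"
proof -
  have "max_partial_sum f n \<in> (\<lambda>k. \<Sum>t<k. f t) ` {..n}"
    unfolding max_partial_sum_def by (rule Max_in) auto
  then show ?thesis by auto
qed

text \<open>The pointwise inequality behind the maximal ergodic theorem: a positive maximum is attained at
  some \<open>k \<ge> 1\<close>, and the partial sum up to \<open>k\<close> is \<open>f 0\<close> plus a partial sum of the shifted sequence.\<close>
lemma max_partial_sum_le_seq_shift:
  "max_partial_sum f n - max_partial_sum (seq_shift f) n \<le> (if 0 < max_partial_sum f n then f 0 else 0)"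
proof (cases "0 < max_partial_sum f n")
  case True
  obtain k where k: "k \<le> n" "max_partial_sum f n = (\<Sum>t<k. f t)"
    using max_partial_sum_attained by blast
  with True obtain j where j: "k = Suc j" by (cases k) auto
  have "max_partial_sum f n = f 0 + (\<Sum>t<j. seq_shift f t)"
    unfolding k(2) j by (rule sum_lessThan_Suc_seq_shift)
  also have "(\<Sum>t<j. seq_shift f t) \<le> max_partial_sum (seq_shift f) n"
    using k(1) j by (intro max_partial_sum_ge) simp
  finally show ?thesis using True by simp
next
  case False
  then show ?thesis using max_partial_sum_nonneg[of "seq_shift f" n] by simp
qed

lemma (in finite_measure) stationary_process_maximal_ergodic:
  fixes c :: real and n :: nat
  assumes st: "stationary_process M X" and int0: "integrable M (X 0)"
  defines "F \<equiv> \<lambda>\<omega>. if 0 < max_partial_sum (\<lambda>t. c - X t \<omega>) n then c - X 0 \<omega> else 0"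
  shows "0 \<le> integral\<^sup>L M F"
proof -
  have [measurable]: "X t \<in> borel_measurable M" for t
    using st by (rule stationary_process_measurable)
  have int: "integrable M (X t)" for t
    using st int0 by (rule stationary_process_integrable)
  define G where "G x = max_partial_sum (\<lambda>t. c - x t) n" for x
  have G [measurable]: "G \<in> borel_measurable seq_space"
    unfolding G_def max_partial_sum_def by measurable
  have [measurable]: "(\<lambda>\<omega>. max_partial_sum (\<lambda>t. c - X t \<omega>) n) \<in> borel_measurable M"
    unfolding max_partial_sum_def by measurable
  have intG: "integrable M (\<lambda>\<omega>. G (\<lambda>t. X t \<omega>))"
    unfolding G_def max_partial_sum_def
    by (intro integrable_MAX) (auto intro!: Bochner_Integration.integrable_sum Bochner_Integration.integrable_diff int)
  have intG1: "integrable M (\<lambda>\<omega>. G (\<lambda>t. X (t + 1) \<omega>))"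
    using stationary_process_integrable_shift[OF st G] intG by blast
  have intF: "integrable M F"
    unfolding F_def by (rule Bochner_Integration.integrable_bound[of _ "\<lambda>\<omega>. c - X 0 \<omega>"])
      (use int0 in auto)
  have "0 = (\<integral>\<omega>. G (\<lambda>t. X t \<omega>) \<partial>M) - (\<integral>\<omega>. G (\<lambda>t. X (t + 1) \<omega>) \<partial>M)"
    using stationary_process_integral_shift[OF st G, of 1] by simp
  also have "\<dots> = (\<integral>\<omega>. G (\<lambda>t. X t \<omega>) - G (\<lambda>t. X (t + 1) \<omega>) \<partial>M)"
    using intG intG1 by simp
  also have "\<dots> \<le> integral\<^sup>L M F"
    using max_partial_sum_le_seq_shift[of "\<lambda>t. c - X t _" n]
    by (intro integral_mono intF Bochner_Integration.integrable_diff intG intG1)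
      (simp add: F_def G_def seq_shift_def)
  finally show ?thesis .
qed

lemma (in prob_space) stationary_process_expectation_le:
  assumes st: "stationary_process M X" and int0: "integrable M (X 0)"
    and below: "AE \<omega> in M. \<exists>n. (\<Sum>t<n. X t \<omega>) < c * real n"
  shows "expectation (X 0) \<le> c"
proof -
  have [measurable]: "X t \<in> borel_measurable M" for t
    using st by (rule stationary_process_measurable)
  define F where "F n \<omega> = (if 0 < max_partial_sum (\<lambda>t. c - X t \<omega>) n then c - X 0 \<omega> else 0)" for n \<omega>
  have [measurable]: "F n \<in> borel_measurable M" for n
    unfolding F_def max_partial_sum_def by measurable
  have "(\<lambda>n. integral\<^sup>L M (F n)) \<longlonglongrightarrow> (\<integral>\<omega>. c - X 0 \<omega> \<partial>M)"
  proof (rule integral_dominated_convergence[where w = "\<lambda>\<omega>. \<bar>c - X 0 \<omega>\<bar>"])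
    show "integrable M (\<lambda>\<omega>. \<bar>c - X 0 \<omega>\<bar>)" using int0 by auto
    show "AE \<omega> in M. norm (F n \<omega>) \<le> \<bar>c - X 0 \<omega>\<bar>" for n by (simp add: F_def)
    show "AE \<omega> in M. (\<lambda>n. F n \<omega>) \<longlonglongrightarrow> c - X 0 \<omega>"
      using below
    proof eventually_elim
      case (elim \<omega>)
      then obtain m where "0 < (\<Sum>t<m. c - X t \<omega>)"
        by (auto simp: sum_subtractf algebra_simps)
      then have "0 < max_partial_sum (\<lambda>t. c - X t \<omega>) n" if "m \<le> n" for n
        using max_partial_sum_ge[OF that] by (meson less_le_trans)
      then have "\<forall>\<^sub>F n in sequentially. F n \<omega> = c - X 0 \<omega>"
        unfolding F_def eventually_sequentially by auto
      then show ?case by (rule tendsto_eventually)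
    qed
  qed measurable
  moreover have "0 \<le> integral\<^sup>L M (F n)" for n
    using stationary_process_maximal_ergodic[OF st int0] unfolding F_def .
  ultimately have "0 \<le> (\<integral>\<omega>. c - X 0 \<omega> \<partial>M)"
    by (intro LIMSEQ_le_const) auto
  then show ?thesis using int0 by (simp add: prob_space)
qed

lemma (in prob_space) ergodic_process_eventually_sum_ge:
  assumes st: "stationary_process M X" and erg: "ergodic_process M X"
    and int0: "integrable M (X 0)" and b: "b < expectation (X 0)"
  shows "AE \<omega> in M. \<forall>\<^sub>F n in sequentially. b * real n \<le> (\<Sum>t<n. X t \<omega>)"
proof -
  have X: "X t \<in> borel_measurable M" for t
    using st by (rule stationary_process_measurable)
  define c where "c = (b + expectation (X 0)) / 2"
  have bc: "b < c" and c: "c < expectation (X 0)"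
    using b by (simp_all add: c_def)
  define E where "E = {\<omega> \<in> space M. (\<lambda>t. X t \<omega>) \<in> slow_paths c}"
  have "E = (\<lambda>\<omega> t. X t \<omega>) -` slow_paths c \<inter> space M"
    by (auto simp: E_def)
  also have "\<dots> \<in> sets M"
    by (rule measurable_sets[OF measurable_path[of X M, OF X] slow_paths_sets])
  finally have E_sets: "E \<in> sets M" .
  have "measure M E \<in> {0, 1}"
    using erg slow_paths_sets slow_paths_seq_shift_iff
    unfolding ergodic_process_def E_def by blast
  moreover have "measure M E \<noteq> 1"
  proof
    assume "measure M E = 1"
    then have "AE \<omega> in M. \<omega> \<in> E" by (rule AE_prob_1)
    then have "AE \<omega> in M. \<exists>n. (\<Sum>t<n. X t \<omega>) < c * real n"
    proof eventually_elim
      case (elim \<omega>)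
      then obtain k where "\<forall>N. \<exists>n\<ge>N. (\<Sum>t<n. X t \<omega>) < (c - 1 / real (Suc k)) * real n"
        by (auto simp: E_def slow_paths_def)
      then obtain n where "(\<Sum>t<n. X t \<omega>) < (c - 1 / real (Suc k)) * real n" by blast
      also have "\<dots> \<le> c * real n" by (simp add: algebra_simps)
      finally show ?case by blast
    qed
    with st int0 have "expectation (X 0) \<le> c" by (rule stationary_process_expectation_le)
    with c show False by simp
  qed
  ultimately have "E \<in> null_sets M"
    using E_sets by (simp add: emeasure_eq_measure null_setsI)
  then show ?thesis
  proof (rule AE_I')
    obtain k where k: "1 / real (Suc k) < c - b"
      using reals_Archimedean[of "c - b"] bc by (auto simp: inverse_eq_divide)
    show "{\<omega> \<in> space M. \<not> (\<forall>\<^sub>F n in sequentially. b * real n \<le> (\<Sum>t<n. X t \<omega>))} \<subseteq> E"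
    proof safe
      fix \<omega> assume \<omega>: "\<omega> \<in> space M"
        and "\<not> (\<forall>\<^sub>F n in sequentially. b * real n \<le> (\<Sum>t<n. X t \<omega>))"
      then have "\<forall>N. \<exists>n\<ge>N. (\<Sum>t<n. X t \<omega>) < b * real n"
        by (auto simp: eventually_sequentially not_le)
      moreover have "b * real n \<le> (c - 1 / real (Suc k)) * real n" for n
        using k by (intro mult_right_mono) auto
      ultimately have "\<forall>N. \<exists>n\<ge>N. (\<Sum>t<n. X t \<omega>) < (c - 1 / real (Suc k)) * real n"
        by (meson less_le_trans)
      with \<omega> show "\<omega> \<in> E" by (auto simp: E_def slow_paths_def)
    qed
  qed
qed

lemma (in prob_space) ergodic_process_AE_eventually_sum_ge:
  assumes "stationary_process M X" and "ergodic_process M X" and "integrable M (X 0)"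
  shows "AE \<omega> in M. \<forall>b < expectation (X 0). \<forall>\<^sub>F n in sequentially. b * real n \<le> (\<Sum>t<n. X t \<omega>)"
proof -
  have "AE \<omega> in M. \<forall>k. \<forall>\<^sub>F n in sequentially.
      (expectation (X 0) - 1 / real (Suc k)) * real n \<le> (\<Sum>t<n. X t \<omega>)"
    unfolding AE_all_countable by (intro allI ergodic_process_eventually_sum_ge[OF assms]) simp
  then show ?thesis
  proof eventually_elim
    case (elim \<omega>)
    show ?case
    proof (intro allI impI)
      fix b assume "b < expectation (X 0)"
      then obtain k where k: "1 / real (Suc k) < expectation (X 0) - b"
        using reals_Archimedean[of "expectation (X 0) - b"] by (auto simp: inverse_eq_divide)
      have b: "b * real n \<le> (expectation (X 0) - 1 / real (Suc k)) * real n" for n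
        using k by (intro mult_right_mono) auto
      from elim[rule_format, of k] show "\<forall>\<^sub>F n in sequentially. b * real n \<le> (\<Sum>t<n. X t \<omega>)"
        by (rule eventually_mono) (use b in \<open>meson order_trans\<close>)
    qed
  qed
qed

section \<open>Battery dynamics\<close>

lemma batteries_Suc_active:
  "batteries PS PD e d (Suc n) =
    (fst (batteries PS PD e d n) - PS * active PS PD e d n + e n,
     snd (batteries PS PD e d n) - PD * active PS PD e d n + d n)"
  by (simp add: active_def split_beta Let_def)

lemma active_nonneg: "0 \<le> active PS PD e d n"
  by (simp add: active_def)

lemma active_le_one: "active PS PD e d n \<le> 1"
  by (simp add: active_def)

lemma batteries_eq_sum:
  "batteries PS PD e d n =
    ((\<Sum>t<n. e t) - PS * (\<Sum>t<n. active PS PD e d t),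
     (\<Sum>t<n. d t) - PD * (\<Sum>t<n. active PS PD e d t))"
proof (induction n)
  case (Suc n)
  show ?case
    unfolding batteries_Suc_active Suc.IH by (simp add: algebra_simps)
qed simp

lemma batteries_nonneg:
  assumes "\<And>t. 0 \<le> e t" and "\<And>t. 0 \<le> d t"
  shows "0 \<le> fst (batteries PS PD e d n) \<and> 0 \<le> snd (batteries PS PD e d n)"
proof (induction n)
  case (Suc n)
  with assms[of n] show ?case
    unfolding batteries_Suc_active active_def by auto
qed simp

lemma active_sum_le_harvest:
  assumes "\<And>t. 0 \<le> e t" and "\<And>t. 0 \<le> d t"
  shows "PS * (\<Sum>t<n. active PS PD e d t) \<le> (\<Sum>t<n. e t)"
    and "PD * (\<Sum>t<n. active PS PD e d t) \<le> (\<Sum>t<n. d t)"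
  using batteries_nonneg[OF assms, where PS = PS and PD = PD and n = n]
  unfolding batteries_eq_sum by auto

lemma idle_slot_harvest_less:
  assumes "active PS PD e d t = 0"
  shows "(\<Sum>s<t. e s) < PS * ((\<Sum>s<t. active PS PD e d s) + 1) \<or>
    (\<Sum>s<t. d s) < PD * ((\<Sum>s<t. active PS PD e d s) + 1)"
proof -
  from assms have "fst (batteries PS PD e d t) < PS \<or> snd (batteries PS PD e d t) < PD"
    by (auto simp: active_def split: if_splits)
  then show ?thesis
    by (simp add: batteries_eq_sum algebra_simps)
qed

text \<open>Once both harvests grow at least like \<open>\<rho>\<close> thresholds per slot, every idle slot finds more than
  \<open>\<rho> t - 1\<close> active slots before it.\<close>
lemma active_sum_ge:
  assumes PS: "0 < PS" and PD: "0 < PD" and "\<rho> \<le> 1"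
    and e: "\<And>t. T \<le> t \<Longrightarrow> \<rho> * PS * real t \<le> (\<Sum>s<t. e s)"
    and d: "\<And>t. T \<le> t \<Longrightarrow> \<rho> * PD * real t \<le> (\<Sum>s<t. d s)"
  shows "\<rho> * real n \<le> (\<Sum>t<n. active PS PD e d t) + real T + 2"
proof (induction n)
  case 0
  show ?case by simp
next
  case (Suc t)
  define N where "N = (\<Sum>s<t. active PS PD e d s)"
  have "0 \<le> N" unfolding N_def by (intro sum_nonneg active_nonneg)
  have step: "\<rho> * real (Suc t) = \<rho> * real t + \<rho>"
    by (simp add: algebra_simps)
  have "active PS PD e d t = 1 \<or> active PS PD e d t = 0"
    by (simp add: active_def)
  then consider "t < T" | "T \<le> t" "active PS PD e d t = 1" | "T \<le> t" "active PS PD e d t = 0"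
    by (cases "t < T") auto
  then show ?case
  proof cases
    case 1
    have "\<rho> * real (Suc t) \<le> real (Suc t)"
      using mult_right_mono[OF \<open>\<rho> \<le> 1\<close>, of "real (Suc t)"] by simp
    also have "\<dots> \<le> real T"
      using 1 by simp
    finally show ?thesis
      using \<open>0 \<le> N\<close> active_nonneg[of PS PD e d t] by (simp add: N_def)
  next
    case 2
    with Suc.IH \<open>\<rho> \<le> 1\<close> show ?thesis
      unfolding step by simp
  next
    case 3
    have "\<rho> * real t < N + 1"
      using idle_slot_harvest_less[OF 3(2)] unfolding N_def[symmetric]
    proof
      assume "(\<Sum>s<t. e s) < PS * (N + 1)"
      moreover have "\<rho> * PS * real t = PS * (\<rho> * real t)" by (simp add: ac_simps)
      ultimately have "PS * (\<rho> * real t) < PS * (N + 1)"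
        using e[OF 3(1)] by linarith
      with PS show ?thesis by simp
    next
      assume "(\<Sum>s<t. d s) < PD * (N + 1)"
      moreover have "\<rho> * PD * real t = PD * (\<rho> * real t)" by (simp add: ac_simps)
      ultimately have "PD * (\<rho> * real t) < PD * (N + 1)"
        using d[OF 3(1)] by linarith
      with PD show ?thesis by simp
    qed
    with 3 \<open>0 \<le> N\<close> \<open>\<rho> \<le> 1\<close> show ?thesis
      unfolding step by (simp add: N_def)
  qed
qed

lemma active_average_eventually_gt:
  assumes PS: "0 < PS" and PD: "0 < PD"
    and e: "\<forall>b < lamS. \<forall>\<^sub>F n in sequentially. b * real n \<le> (\<Sum>t<n. e t)"
    and d: "\<forall>b < lamD. \<forall>\<^sub>F n in sequentially. b * real n \<le> (\<Sum>t<n. d t)"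
    and \<rho>: "\<rho> < min 1 (min (lamS / PS) (lamD / PD))"
  shows "\<forall>\<^sub>F n in sequentially. \<rho> < (\<Sum>t<n. active PS PD e d t) / real n"
proof -
  define r where "r = min 1 (min (lamS / PS) (lamD / PD))"
  have "\<rho> < r" "r \<le> 1" "r \<le> lamS / PS" "r \<le> lamD / PD"
    using \<rho> by (simp_all add: r_def)
  moreover obtain \<rho>' where "\<rho> < \<rho>'" "\<rho>' < r"
    using dense \<open>\<rho> < r\<close> by blast
  ultimately have "\<rho> < \<rho>'" "\<rho>' \<le> 1" "\<rho>' < lamS / PS" "\<rho>' < lamD / PD"
    by linarith+
  with PS PD have "\<rho>' * PS < lamS" "\<rho>' * PD < lamD"
    by (simp_all add: pos_less_divide_eq)
  with e d have "\<forall>\<^sub>F t in sequentially. \<rho>' * PS * real t \<le> (\<Sum>s<t. e s) \<and> \<rho>' * PD * real t \<le> (\<Sum>s<t. d s)"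
    by (intro eventually_conj) blast+
  then obtain T where T: "\<And>t. T \<le> t \<Longrightarrow>
      \<rho>' * PS * real t \<le> (\<Sum>s<t. e s) \<and> \<rho>' * PD * real t \<le> (\<Sum>s<t. d s)"
    unfolding eventually_sequentially by blast
  have lower: "\<rho>' * real n \<le> (\<Sum>t<n. active PS PD e d t) + real T + 2" for n
    using T by (intro active_sum_ge[OF PS PD \<open>\<rho>' \<le> 1\<close>, of T]) auto
  obtain N :: nat where N: "real T + 2 < (\<rho>' - \<rho>) * real N"
    using reals_Archimedean3 \<open>\<rho> < \<rho>'\<close> by (metis diff_gt_0_iff_gt mult.commute)
  have "0 < N"
    using N by (cases N) auto
  show ?thesis
    unfolding eventually_sequentially
  proof (intro exI allI impI)
    fix n assume "N \<le> n"
    then have "(\<rho>' - \<rho>) * real N \<le> (\<rho>' - \<rho>) * real n"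
      using \<open>\<rho> < \<rho>'\<close> by (intro mult_left_mono) auto
    moreover have "\<rho>' * real n = \<rho> * real n + (\<rho>' - \<rho>) * real n"
      by (simp add: algebra_simps)
    ultimately have "\<rho> * real n < (\<Sum>t<n. active PS PD e d t)"
      using N lower[of n] by linarith
    moreover have "0 < real n"
      using \<open>0 < N\<close> \<open>N \<le> n\<close> by simp
    ultimately show "\<rho> < (\<Sum>t<n. active PS PD e d t) / real n"
      by (simp add: pos_less_divide_eq)
  qed
qed

section \<open>Expected activity\<close>

lemma borel_measurable_batteries:
  assumes [measurable]: "\<And>t. ES t \<in> borel_measurable M" "\<And>t. ED t \<in> borel_measurable M"
  shows "(\<lambda>\<omega>. fst (batteries PS PD (\<lambda>k. ES k \<omega>) (\<lambda>k. ED k \<omega>) n)) \<in> borel_measurable M \<and>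
    (\<lambda>\<omega>. snd (batteries PS PD (\<lambda>k. ES k \<omega>) (\<lambda>k. ED k \<omega>) n)) \<in> borel_measurable M"
proof (induction n)
  case (Suc n)
  then have [measurable]:
      "(\<lambda>\<omega>. fst (batteries PS PD (\<lambda>k. ES k \<omega>) (\<lambda>k. ED k \<omega>) n)) \<in> borel_measurable M"
      "(\<lambda>\<omega>. snd (batteries PS PD (\<lambda>k. ES k \<omega>) (\<lambda>k. ED k \<omega>) n)) \<in> borel_measurable M"
    by simp_all
  show ?case
    unfolding batteries_Suc_active active_def by measurable
qed simp

lemma borel_measurable_active:
  assumes "\<And>t. ES t \<in> borel_measurable M" "\<And>t. ED t \<in> borel_measurable M"
  shows "(\<lambda>\<omega>. active PS PD (\<lambda>k. ES k \<omega>) (\<lambda>k. ED k \<omega>) n) \<in> borel_measurable M"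
proof -
  note borel_measurable_batteries[OF assms, where PS = PS and PD = PD and n = n, THEN conjunct1, measurable]
    borel_measurable_batteries[OF assms, where PS = PS and PD = PD and n = n, THEN conjunct2, measurable]
  show ?thesis unfolding active_def by measurable
qed

lemma (in finite_measure) integrable_active:
  assumes "\<And>t. ES t \<in> borel_measurable M" "\<And>t. ED t \<in> borel_measurable M"
  shows "integrable M (\<lambda>\<omega>. active PS PD (\<lambda>k. ES k \<omega>) (\<lambda>k. ED k \<omega>) n)"
  by (intro integrable_const_bound[where B = 1] AE_I2 borel_measurable_active assms)
    (simp add: active_nonneg active_le_one)

lemma (in prob_space) expected_active_average_le:
  assumes stS: "stationary_process M ES" and stD: "stationary_process M ED"
    and nnS: "\<And>t \<omega>. \<omega> \<in> space M \<Longrightarrow> 0 \<le> ES t \<omega>" and nnD: "\<And>t \<omega>. \<omega> \<in> space M \<Longrightarrow> 0 \<le> ED t \<omega>"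
    and intS: "integrable M (ES 0)" and intD: "integrable M (ED 0)"
    and PS: "0 < PS" and PD: "0 < PD"
  shows "(\<Sum>t<n. expectation (\<lambda>\<omega>. active PS PD (\<lambda>k. ES k \<omega>) (\<lambda>k. ED k \<omega>) t)) / real n
    \<le> min 1 (min (expectation (ES 0) / PS) (expectation (ED 0) / PD))"
proof -
  define A where "A \<omega> = (\<Sum>t<n. active PS PD (\<lambda>k. ES k \<omega>) (\<lambda>k. ED k \<omega>) t)" for \<omega>
  have act: "integrable M (\<lambda>\<omega>. active PS PD (\<lambda>k. ES k \<omega>) (\<lambda>k. ED k \<omega>) t)" for t
    by (intro integrable_active stationary_process_measurable[OF stS] stationary_process_measurable[OF stD])
  then have intA: "integrable M A"
    unfolding A_def by (rule Bochner_Integration.integrable_sum)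
  have sum_eq: "(\<Sum>t<n. expectation (\<lambda>\<omega>. active PS PD (\<lambda>k. ES k \<omega>) (\<lambda>k. ED k \<omega>) t)) = expectation A"
    unfolding A_def using act by (rule Bochner_Integration.integral_sum[symmetric])
  have harvest: "c * expectation A \<le> real n * expectation (X 0)"
    if st: "stationary_process M X" and int: "integrable M (X 0)"
      and le: "\<And>\<omega>. \<omega> \<in> space M \<Longrightarrow> c * A \<omega> \<le> (\<Sum>t<n. X t \<omega>)" for c X
  proof -
    have "c * expectation A = expectation (\<lambda>\<omega>. c * A \<omega>)" by simp
    also have "\<dots> \<le> expectation (\<lambda>\<omega>. \<Sum>t<n. X t \<omega>)"
      using stationary_process_integrable[OF st int] le
      by (intro integral_mono integrable_mult_right intA Bochner_Integration.integrable_sum) auto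
    also have "\<dots> = real n * expectation (X 0)"
      by (rule stationary_process_integral_sum[OF st int])
    finally show ?thesis .
  qed
  have "A \<omega> \<le> real n" for \<omega>
    using sum_mono[of "{..<n}" "\<lambda>t. active PS PD (\<lambda>k. ES k \<omega>) (\<lambda>k. ED k \<omega>) t" "\<lambda>_. 1"]
    by (simp add: A_def active_le_one)
  then have "expectation A \<le> expectation (\<lambda>_. real n)"
    using intA by (intro integral_mono) auto
  then have "expectation A \<le> real n" by (simp add: prob_space)
  moreover have "PS * expectation A \<le> real n * expectation (ES 0)"
    using nnS nnD by (intro harvest[OF stS intS]) (simp add: A_def active_sum_le_harvest)
  moreover have "PD * expectation A \<le> real n * expectation (ED 0)"
    using nnS nnD by (intro harvest[OF stD intD]) (simp add: A_def active_sum_le_harvest)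
  moreover have "0 \<le> expectation (ES 0)" "0 \<le> expectation (ED 0)"
    using nnS nnD by (simp_all add: integral_nonneg)
  ultimately show ?thesis
    unfolding sum_eq using PS PD
    by (cases "n = 0") (auto simp: field_simps)
qed

lemma (in prob_space) expected_active_average_eventually_gt:
  assumes stS: "stationary_process M ES" and ergS: "ergodic_process M ES"
    and stD: "stationary_process M ED" and ergD: "ergodic_process M ED"
    and intS: "integrable M (ES 0)" and intD: "integrable M (ED 0)"
    and PS: "0 < PS" and PD: "0 < PD"
    and \<rho>: "\<rho> < min 1 (min (expectation (ES 0) / PS) (expectation (ED 0) / PD))"
  shows "\<forall>\<^sub>F n in sequentially.
    \<rho> < (\<Sum>t<n. expectation (\<lambda>\<omega>. active PS PD (\<lambda>k. ES k \<omega>) (\<lambda>k. ED k \<omega>) t)) / real n"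
proof -
  define r where "r = min 1 (min (expectation (ES 0) / PS) (expectation (ED 0) / PD))"
  define avg where "avg n \<omega> = (\<Sum>t<n. active PS PD (\<lambda>k. ES k \<omega>) (\<lambda>k. ED k \<omega>) t) / real n" for n \<omega>
  have act: "integrable M (\<lambda>\<omega>. active PS PD (\<lambda>k. ES k \<omega>) (\<lambda>k. ED k \<omega>) t)" for t
    by (intro integrable_active stationary_process_measurable[OF stS] stationary_process_measurable[OF stD])
  have int_avg: "integrable M (avg n)" for n
    unfolding avg_def using act by (intro integrable_divide Bochner_Integration.integrable_sum)
  have [measurable]: "avg n \<in> borel_measurable M" for n
    using int_avg by (rule borel_measurable_integrable)
  have avg_nonneg: "0 \<le> avg n \<omega>" for n \<omega>
    unfolding avg_def by (intro divide_nonneg_nonneg sum_nonneg active_nonneg) simp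
  text \<open>Truncating the averages at \<open>r\<close> provides the domination needed to pass to expectations.\<close>
  have "(\<lambda>n. expectation (\<lambda>\<omega>. min (avg n \<omega>) r)) \<longlonglongrightarrow> expectation (\<lambda>\<omega>. r)"
  proof (rule integral_dominated_convergence[where w = "\<lambda>_. \<bar>r\<bar>"])
    show "(\<lambda>\<omega>. min (avg n \<omega>) r) \<in> borel_measurable M" for n
      by measurable
    show "AE \<omega> in M. norm (min (avg n \<omega>) r) \<le> \<bar>r\<bar>" for n
      using avg_nonneg[of n] by (auto simp: min_def)
    show "AE \<omega> in M. (\<lambda>n. min (avg n \<omega>) r) \<longlonglongrightarrow> r"
      using ergodic_process_AE_eventually_sum_ge[OF stS ergS intS]
        ergodic_process_AE_eventually_sum_ge[OF stD ergD intD]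
    proof eventually_elim
      case (elim \<omega>)
      show ?case
        unfolding order_tendsto_iff
      proof (intro conjI allI impI)
        fix l assume "l < r"
        with elim have "\<forall>\<^sub>F n in sequentially. l < avg n \<omega>"
          unfolding avg_def r_def by (intro active_average_eventually_gt[OF PS PD]) auto
        with \<open>l < r\<close> show "\<forall>\<^sub>F n in sequentially. l < min (avg n \<omega>) r"
          by (auto elim: eventually_mono)
      qed (auto intro: always_eventually min.strict_coboundedI2)
    qed
  qed simp_all
  then have "\<forall>\<^sub>F n in sequentially. \<rho> < expectation (\<lambda>\<omega>. min (avg n \<omega>) r)"
    using \<rho> unfolding r_def[symmetric] by (simp add: order_tendsto_iff prob_space)
  then show ?thesis
  proof (rule eventually_mono)
    fix n assume "\<rho> < expectation (\<lambda>\<omega>. min (avg n \<omega>) r)"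
    also have "\<dots> \<le> expectation (avg n)"
      by (intro integral_mono integrable_min int_avg) auto
    also have "\<dots> = (\<Sum>t<n. expectation (\<lambda>\<omega>. active PS PD (\<lambda>k. ES k \<omega>) (\<lambda>k. ED k \<omega>) t)) / real n"
      unfolding avg_def integral_divide_zero using act by (subst Bochner_Integration.integral_sum) auto
    finally show "\<rho> < \<dots>" .
  qed
qed

theorem proposition1:
  fixes M :: "'a measure"
    and ES ED :: "nat \<Rightarrow> 'a \<Rightarrow> real"
    and PS PD lamS lamD :: real
  assumes "prob_space M"
    and "stationary_process M ES" and "ergodic_process M ES"
    and "stationary_process M ED" and "ergodic_process M ED"
    and "\<And>t \<omega>. \<omega> \<in> space M \<Longrightarrow> ES t \<omega> \<ge> 0"
    and "\<And>t \<omega>. \<omega> \<in> space M \<Longrightarrow> ED t \<omega> \<ge> 0"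
    and "integrable M (ES 0)" and "prob_space.expectation M (ES 0) = lamS"
    and "integrable M (ED 0)" and "prob_space.expectation M (ED 0) = lamD"
    and "lamS > 0" and "lamD > 0"
    and "PS > 0" and "PD > 0"
  shows "(\<lambda>n. (\<Sum>t<n. prob_space.expectation M
                  (\<lambda>\<omega>. active PS PD (\<lambda>k. ES k \<omega>) (\<lambda>k. ED k \<omega>) t)) / real n)
           \<longlonglongrightarrow> min 1 (min (lamS / PS) (lamD / PD))"
proof -
  interpret prob_space M by fact
  define avg where
    "avg n = (\<Sum>t<n. expectation (\<lambda>\<omega>. active PS PD (\<lambda>k. ES k \<omega>) (\<lambda>k. ED k \<omega>) t)) / real n"
    for n
  have upper: "avg n \<le> min 1 (min (lamS / PS) (lamD / PD))" for n
    using expected_active_average_le[OF assms(2,4,6,7,8,10,14,15)]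
    unfolding avg_def assms(9,11) .
  have lower: "\<forall>\<^sub>F n in sequentially. \<rho> < avg n" if "\<rho> < min 1 (min (lamS / PS) (lamD / PD))" for \<rho>
    using expected_active_average_eventually_gt[OF assms(2,3,4,5,8,10,14,15)] that
    unfolding avg_def assms(9,11) .
  have "avg \<longlonglongrightarrow> min 1 (min (lamS / PS) (lamD / PD))"
    unfolding order_tendsto_iff
  proof (intro conjI allI impI)
    fix u assume "min 1 (min (lamS / PS) (lamD / PD)) < u"
    with upper have "avg n < u" for n
      by (rule le_less_trans)
    then show "\<forall>\<^sub>F n in sequentially. avg n < u" by simp
  qed (rule lower)
  then show ?thesis
    unfolding avg_def[abs_def] .
qed

end
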